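(* Let $b>0$ and $\psi,x_0,x_\infty$ be as in the context. Then $(x-c)\psi'(x)-\psi(x)<0$ for all $x<x_0$, and $(x-c)\psi''(x)-\psi'(x)>0$ for all $x>x_\infty$.
   Context: Constants: $a\in\mathbb{R}$, $b>0$, $\sigma>0$, $\rho>0$, $c>0$. For $\beta<0$, let $D_\beta(x)=\frac{e^{-x^2/4}}{\Gamma(-\beta)}\int_0^\infty t^{-\beta-1}e^{-t^2/2-xt}\,dt$, and $\psi(x)=e^{\frac{(bx-a)^2}{2\sigma^2 b}}D_{-\rho/b}\big(-\frac{bx-a}{\sigma b}\sqrt{2b}\big)$, the positive strictly increasing fundamental solution of $\frac12\sigma^2u''+(a-bx)u'-\rho u=0$. Let $x_0$ be the unique solution on $(c,\infty)$ of $(x-c)\psi'(x)-\psi(x)=0$ and $x_\infty$ the unique solution on $(c,\infty)$ of $(x-c)\psi''(x)-\psi'(x)=0$. *)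

theory Defs
  imports "HOL-Analysis.Analysis"
begin

text \<open>Parabolic cylinder function, integral representation, intended for beta < 0.\<close>
definition parcyl :: "real \<Rightarrow> real \<Rightarrow> real" where
  "parcyl \<beta> x = exp (- (x\<^sup>2) / 4) / Gamma (- \<beta>) *
     integral {0<..} (\<lambda>t. t powr (- \<beta> - 1) * exp (- (t\<^sup>2) / 2 - x * t))"

text \<open>Increasing fundamental solution psi of (1/2) sigma^2 u'' + (a - b x) u' - rho u = 0.\<close>
definition psi_fun :: "real \<Rightarrow> real \<Rightarrow> real \<Rightarrow> real \<Rightarrow> real \<Rightarrow> real" where
  "psi_fun a b \<sigma> \<rho> x = exp ((b * x - a)\<^sup>2 / (2 * \<sigma>\<^sup>2 * b)) *
     parcyl (- \<rho> / b) (- ((b * x - a) / (\<sigma> * b)) * sqrt (2 * b))"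

end

theory Submission
  imports Defs
begin

text \<open>Put \<open>I s w = \<integral>\<^sub>0\<^sup>\<infinity> t powr (s - 1) * exp (- t\<^sup>2 / 2 + w * t) dt\<close>. The integral
  representation of \<open>D\<^sub>\<beta>\<close> gives \<open>\<psi> x = I \<nu> (k * x + m) / \<Gamma> \<nu>\<close> with \<open>\<nu> = \<rho> / b\<close>,
  \<open>k = sqrt (2 * b) / \<sigma> > 0\<close> and some constant \<open>m\<close>. Differentiating under the integral sign gives
  \<open>\<partial>\<^sub>w I s w = I (s + 1) w\<close>, so all derivatives of \<open>\<psi>\<close> are positive and \<open>\<psi>'\<close>, \<open>\<psi>''\<close> are
  strictly increasing. If \<open>f'\<close> is strictly increasing, the mean value theorem shows that
  \<open>(x - c) * f' x - f x\<close> (minus the value at \<open>c\<close> of the tangent to \<open>f\<close> at \<open>x\<close>) is negative on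
  \<open>(c, x\<^sub>1)\<close> and positive on \<open>(x\<^sub>1, \<infinity>)\<close> whenever it vanishes at \<open>x\<^sub>1 > c\<close>; for \<open>x \<le> c\<close> it is
  negative as soon as \<open>f > 0\<close> and \<open>f' \<ge> 0\<close>. Apply this to \<open>f = \<psi>\<close> and \<open>f = \<psi>'\<close>.\<close>

lemma abs_exp_minus_one_minus_le: "\<bar>exp x - 1 - x\<bar> \<le> x\<^sup>2 * exp \<bar>x\<bar>" for x :: real
proof -
  obtain t where t: "\<bar>t\<bar> \<le> \<bar>x\<bar>" "exp x = (\<Sum>m<2. x ^ m / fact m) + exp t / fact 2 * x ^ 2"
    using Maclaurin_exp_le[of x 2] by blast
  then have "exp x - 1 - x = exp t * x\<^sup>2 / 2"
    by (simp add: eval_nat_numeral field_simps)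
  moreover have "exp t * x\<^sup>2 \<le> exp \<bar>x\<bar> * x\<^sup>2"
    using t(1) by (intro mult_right_mono) auto
  moreover have "exp t * x\<^sup>2 \<ge> 0"
    by simp
  ultimately have "\<bar>exp x - 1 - x\<bar> \<le> exp \<bar>x\<bar> * x\<^sup>2"
    by linarith
  then show ?thesis
    by (simp only: mult.commute)
qed

lemma DERIV_of_quadratic_remainder_bound:
  fixes f :: "real \<Rightarrow> real"
  assumes "\<And>h. \<bar>h\<bar> \<le> 1 \<Longrightarrow> \<bar>f (w + h) - f w - h * D\<bar> \<le> h\<^sup>2 * C"
  shows "(f has_real_derivative D) (at w)"
proof -
  have quotient_bound: "\<bar>(f (w + h) - f w) / h - D\<bar> \<le> \<bar>h\<bar> * C" if h: "h \<noteq> 0" "\<bar>h\<bar> \<le> 1" for h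
  proof -
    have "(f (w + h) - f w) / h - D = (f (w + h) - f w - h * D) / h"
      using h by (simp add: field_simps)
    then have "\<bar>(f (w + h) - f w) / h - D\<bar> = \<bar>f (w + h) - f w - h * D\<bar> / \<bar>h\<bar>"
      by simp
    also have "\<dots> \<le> h\<^sup>2 * C / \<bar>h\<bar>"
      using assms h by (intro divide_right_mono) auto
    also have "\<dots> = \<bar>h\<bar> * C"
      using h by (simp add: field_simps power2_eq_square)
    finally show ?thesis .
  qed
  have "\<forall>\<^sub>F h in at 0. norm ((f (w + h) - f w) / h - D) \<le> \<bar>h\<bar> * C"
    unfolding eventually_at by (intro exI[of _ 1]) (auto intro!: quotient_bound[unfolded real_norm_def])
  moreover have "((\<lambda>h. \<bar>h\<bar> * C) \<longlongrightarrow> 0) (at 0)"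
    by (auto intro!: tendsto_eq_intros)
  ultimately have "((\<lambda>h. (f (w + h) - f w) / h - D) \<longlongrightarrow> 0) (at 0)"
    by (rule Lim_null_comparison)
  then show ?thesis
    unfolding DERIV_def by (simp add: LIM_zero_iff)
qed

context
  fixes f f' :: "real \<Rightarrow> real" and c x1 :: real
  assumes f_deriv: "\<And>x. (f has_real_derivative f' x) (at x)"
    and strict_mono_f': "strict_mono f'"
    and x1_gt_c: "x1 > c"
    and x1_root: "(x1 - c) * f' x1 - f x1 = 0"
begin

lemma tangent_gap_neg_before_root:
  assumes "c < x" "x < x1"
  shows "(x - c) * f' x - f x < 0"
proof -
  obtain z where z: "x < z" "z < x1" "f x1 - f x = (x1 - x) * f' z"
    using MVT2[OF \<open>x < x1\<close>, of f f'] f_deriv by blast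
  have "(x1 - x) * f' z < (x1 - x) * f' x1"
    using z assms strict_mono_f' by (simp add: strict_mono_less)
  moreover have "(x - c) * f' x < (x - c) * f' x1"
    using assms strict_mono_f' by (simp add: strict_mono_less)
  ultimately show ?thesis
    using z(3) x1_root by (simp add: algebra_simps)
qed

lemma tangent_gap_pos_after_root:
  assumes "x1 < x"
  shows "(x - c) * f' x - f x > 0"
proof -
  obtain z where z: "x1 < z" "z < x" "f x - f x1 = (x - x1) * f' z"
    using MVT2[OF \<open>x1 < x\<close>, of f f'] f_deriv by blast
  have "(x - x1) * f' z < (x - x1) * f' x"
    using z assms strict_mono_f' by (simp add: strict_mono_less)
  moreover have "(x1 - c) * f' x1 < (x1 - c) * f' x"
    using assms x1_gt_c strict_mono_f' by (simp add: strict_mono_less)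
  ultimately show ?thesis
    using z(3) x1_root by (simp add: algebra_simps)
qed

lemma tangent_gap_neg_below_root:
  assumes "x < x1" "f x > 0" "f' x \<ge> 0"
  shows "(x - c) * f' x - f x < 0"
proof (cases "x \<le> c")
  case True
  then have "(x - c) * f' x \<le> 0"
    using assms(3) by (simp add: mult_nonpos_nonneg)
  then show ?thesis
    using assms(2) by simp
next
  case False
  then show ?thesis
    using tangent_gap_neg_before_root assms(1) by simp
qed

end

definition parcyl_kernel :: "real \<Rightarrow> real \<Rightarrow> real \<Rightarrow> real" where
  "parcyl_kernel s w t = t powr (s - 1) * exp (- (t\<^sup>2) / 2 + w * t)"

text \<open>For \<open>s > 0\<close>, \<open>parcyl_integral s w = Gamma s * exp (w\<^sup>2 / 4) * parcyl (- s) (- w)\<close>.\<close>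
definition parcyl_integral :: "real \<Rightarrow> real \<Rightarrow> real" where
  "parcyl_integral s w = integral {0<..} (parcyl_kernel s w)"

lemma parcyl_kernel_pos: "t > 0 \<Longrightarrow> parcyl_kernel s w t > 0"
  unfolding parcyl_kernel_def by simp

lemma continuous_on_parcyl_kernel: "continuous_on {0<..} (parcyl_kernel s w)"
  unfolding parcyl_kernel_def by (intro continuous_intros) auto

lemma parcyl_kernel_integrable:
  assumes "s > 0"
  shows "parcyl_kernel s w integrable_on {0<..}"
proof -
  define C where "C = exp ((w + 1)\<^sup>2 / 2)"
  have "(\<lambda>t. t powr (s - 1) / exp t) integrable_on {0..}"
    using Gamma_integral_real[OF assms] by blast
  then have "(\<lambda>t. t powr (s - 1) / exp t) integrable_on {0<..}"
    by (rule integrable_spike_set) (auto intro: negligible_subset[of "{0}"])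
  then have dominant: "(\<lambda>t. C * (t powr (s - 1) / exp t)) integrable_on {0<..}"
    by (rule integrable_on_mult_right)
  show ?thesis
  proof (rule measurable_bounded_by_integrable_imp_integrable[OF _ dominant])
    show "parcyl_kernel s w \<in> borel_measurable (lebesgue_on {0<..})"
      by (rule continuous_imp_measurable_on_sets_lebesgue[OF continuous_on_parcyl_kernel]) auto
  next
    fix t :: real assume "t \<in> {0<..}"
    have "- (t\<^sup>2) / 2 + w * t \<le> (w + 1)\<^sup>2 / 2 - t"
      using sum_power2_ge_zero[of "t - (w + 1)" 0] by (simp add: power2_eq_square algebra_simps)
    then have "t powr (s - 1) * exp (- (t\<^sup>2) / 2 + w * t) \<le> t powr (s - 1) * exp ((w + 1)\<^sup>2 / 2 - t)"
      by (intro mult_left_mono) auto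
    then show "norm (parcyl_kernel s w t) \<le> C * (t powr (s - 1) / exp t)"
      by (simp add: parcyl_kernel_def C_def exp_diff mult_ac)
  qed simp
qed

lemma parcyl_integral_pos:
  assumes "s > 0"
  shows "parcyl_integral s w > 0"
proof -
  have cont: "continuous_on {1..2} (parcyl_kernel s w)"
    by (rule continuous_on_subset[OF continuous_on_parcyl_kernel]) auto
  have "0 < integral {1..2} (parcyl_kernel s w)"
    using integral_less_real[of 1 2 "\<lambda>_. 0" "parcyl_kernel s w"] cont parcyl_kernel_pos by simp
  also have "\<dots> \<le> parcyl_integral s w"
    unfolding parcyl_integral_def
    using cont parcyl_kernel_integrable[OF assms] parcyl_kernel_pos
    by (intro integral_subset_le) (auto intro: integrable_continuous_real less_imp_le)
  finally show ?thesis .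
qed

lemma parcyl_kernel_second_order_bound:
  assumes t: "t > 0" and h: "\<bar>h\<bar> \<le> 1"
  shows "\<bar>parcyl_kernel s (w + h) t - parcyl_kernel s w t - h * parcyl_kernel (s + 1) w t\<bar>
    \<le> h\<^sup>2 * parcyl_kernel (s + 2) (\<bar>w\<bar> + 1) t"
proof -
  define P where "P = t powr (s - 1)"
  define E where "E = exp (- (t\<^sup>2) / 2 + w * t)"
  have P_pos: "P > 0"
    using t by (simp add: P_def)
  have P1: "t powr (s + 1 - 1) = P * t"
    using powr_add[of t "s - 1" 1] t by (simp add: P_def)
  have P2: "t powr (s + 2 - 1) = P * t\<^sup>2"
    using powr_add[of t "s - 1" 2] t by (simp add: P_def)
  have "parcyl_kernel s (w + h) t - parcyl_kernel s w t - h * parcyl_kernel (s + 1) w t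
      = P * E * (exp (h * t) - 1 - h * t)"
    unfolding parcyl_kernel_def P1 P_def[symmetric] E_def
    by (simp add: algebra_simps exp_add[symmetric])
  then have "\<bar>parcyl_kernel s (w + h) t - parcyl_kernel s w t - h * parcyl_kernel (s + 1) w t\<bar>
      = P * E * \<bar>exp (h * t) - 1 - h * t\<bar>"
    using P_pos by (simp add: abs_mult E_def)
  also have "\<dots> \<le> P * E * ((h * t)\<^sup>2 * exp \<bar>h * t\<bar>)"
    using P_pos abs_exp_minus_one_minus_le[of "h * t"] by (intro mult_left_mono) (auto simp: E_def)
  also have "\<dots> = h\<^sup>2 * (P * t\<^sup>2) * exp (- (t\<^sup>2) / 2 + (w + \<bar>h\<bar>) * t)"
    using t by (simp add: E_def abs_mult exp_add[symmetric] algebra_simps)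
  also have "\<dots> \<le> h\<^sup>2 * (P * t\<^sup>2) * exp (- (t\<^sup>2) / 2 + (\<bar>w\<bar> + 1) * t)"
  proof -
    have "(w + \<bar>h\<bar>) * t \<le> (\<bar>w\<bar> + 1) * t"
      using t h by (intro mult_right_mono) auto
    then show ?thesis
      using P_pos by (intro mult_left_mono) auto
  qed
  also have "\<dots> = h\<^sup>2 * parcyl_kernel (s + 2) (\<bar>w\<bar> + 1) t"
    unfolding parcyl_kernel_def P2 by simp
  finally show ?thesis .
qed

lemma parcyl_integral_second_order_bound:
  assumes s: "s > 0" and h: "\<bar>h\<bar> \<le> 1"
  shows "\<bar>parcyl_integral s (w + h) - parcyl_integral s w - h * parcyl_integral (s + 1) w\<bar>
    \<le> h\<^sup>2 * parcyl_integral (s + 2) (\<bar>w\<bar> + 1)"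
proof -
  let ?D = "\<lambda>t. parcyl_kernel s (w + h) t - parcyl_kernel s w t - h * parcyl_kernel (s + 1) w t"
  have int: "parcyl_kernel s (w + h) integrable_on {0<..}" "parcyl_kernel s w integrable_on {0<..}"
    "parcyl_kernel (s + 1) w integrable_on {0<..}" "parcyl_kernel (s + 2) (\<bar>w\<bar> + 1) integrable_on {0<..}"
    using s by (auto intro!: parcyl_kernel_integrable)
  have "parcyl_integral s (w + h) - parcyl_integral s w - h * parcyl_integral (s + 1) w = integral {0<..} ?D"
    unfolding parcyl_integral_def using int
    by (simp add: integral_diff integrable_diff integrable_on_mult_right)
  also have "\<bar>\<dots>\<bar> \<le> integral {0<..} (\<lambda>t. h\<^sup>2 * parcyl_kernel (s + 2) (\<bar>w\<bar> + 1) t)"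
    using integral_norm_bound_integral[of ?D "{0<..}" "\<lambda>t. h\<^sup>2 * parcyl_kernel (s + 2) (\<bar>w\<bar> + 1) t"]
      parcyl_kernel_second_order_bound[OF _ h] int
    by (simp add: integrable_diff integrable_on_mult_right)
  also have "\<dots> = h\<^sup>2 * parcyl_integral (s + 2) (\<bar>w\<bar> + 1)"
    unfolding parcyl_integral_def by simp
  finally show ?thesis .
qed

lemma parcyl_integral_has_real_derivative:
  assumes "s > 0"
  shows "(parcyl_integral s has_real_derivative parcyl_integral (s + 1) w) (at w)"
  by (rule DERIV_of_quadratic_remainder_bound) (rule parcyl_integral_second_order_bound[OF assms])

lemma parcyl_integral_affine_has_real_derivative:
  assumes "s > 0"
  shows "((\<lambda>x. C * parcyl_integral s (k * x + m)) has_real_derivative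
    C * k * parcyl_integral (s + 1) (k * x + m)) (at x)"
proof -
  have "((\<lambda>x. parcyl_integral s (k * x + m)) has_real_derivative parcyl_integral (s + 1) (k * x + m) * k) (at x)"
    by (rule DERIV_chain2[OF parcyl_integral_has_real_derivative[OF assms]]) (auto intro!: derivative_eq_intros)
  from DERIV_cmult[OF this, of C] show ?thesis
    by (simp add: mult_ac)
qed

lemma psi_fun_eq_parcyl_integral:
  fixes a b \<sigma> \<rho> :: real
  defines "k \<equiv> sqrt (2 * b) / \<sigma>" and "m \<equiv> - a * sqrt (2 * b) / (\<sigma> * b)"
  assumes b: "b > 0" and \<sigma>: "\<sigma> > 0"
  shows "psi_fun a b \<sigma> \<rho> x = parcyl_integral (\<rho> / b) (k * x + m) / Gamma (\<rho> / b)"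
proof -
  define u where "u = k * x + m"
  have u: "u = (b * x - a) * sqrt (2 * b) / (\<sigma> * b)"
    unfolding u_def k_def m_def using b \<sigma> by (simp add: field_simps)
  have prefactor: "(b * x - a)\<^sup>2 / (2 * \<sigma>\<^sup>2 * b) = u\<^sup>2 / 4"
    unfolding u power_divide power_mult_distrib using b \<sigma> by (simp add: field_simps power2_eq_square)
  have argument: "- ((b * x - a) / (\<sigma> * b)) * sqrt (2 * b) = - u"
    unfolding u by simp
  have kernel: "(\<lambda>t. t powr (- (- \<rho> / b) - 1) * exp (- (t\<^sup>2) / 2 - (- u) * t)) = parcyl_kernel (\<rho> / b) u"
    unfolding parcyl_kernel_def by (rule ext) simp
  show ?thesis
    unfolding psi_fun_def parcyl_def prefactor argument kernel u_def[symmetric] parcyl_integral_def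
    by (simp add: exp_minus field_simps)
qed

lemma higher_deriv_psi_fun:
  fixes a b \<sigma> \<rho> :: real
  defines "k \<equiv> sqrt (2 * b) / \<sigma>" and "m \<equiv> - a * sqrt (2 * b) / (\<sigma> * b)"
  assumes b: "b > 0" and \<sigma>: "\<sigma> > 0" and \<rho>: "\<rho> > 0"
  shows "(deriv ^^ n) (psi_fun a b \<sigma> \<rho>) =
    (\<lambda>x. k ^ n / Gamma (\<rho> / b) * parcyl_integral (\<rho> / b + n) (k * x + m))"
proof (induction n)
  case 0
  show ?case
    using psi_fun_eq_parcyl_integral[OF b \<sigma>] by (simp add: fun_eq_iff k_def m_def)
next
  case (Suc n)
  have "\<rho> / b + n > 0"
    using b \<rho> by (simp add: add_pos_nonneg)
  from parcyl_integral_affine_has_real_derivative[OF this, of "k ^ n / Gamma (\<rho> / b)" k m]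
  have "deriv (\<lambda>x. k ^ n / Gamma (\<rho> / b) * parcyl_integral (\<rho> / b + n) (k * x + m)) =
      (\<lambda>x. k ^ n / Gamma (\<rho> / b) * k * parcyl_integral (\<rho> / b + n + 1) (k * x + m))"
    by (simp add: fun_eq_iff DERIV_imp_deriv)
  also have "\<dots> = (\<lambda>x. k ^ Suc n / Gamma (\<rho> / b) * parcyl_integral (\<rho> / b + Suc n) (k * x + m))"
    by (simp add: algebra_simps)
  finally show ?case
    by (simp add: Suc.IH)
qed

lemma higher_deriv_psi_fun_pos:
  assumes "b > 0" "\<sigma> > 0" "\<rho> > 0"
  shows "(deriv ^^ n) (psi_fun a b \<sigma> \<rho>) x > 0"
  unfolding higher_deriv_psi_fun[OF assms]
  using assms by (intro mult_pos_pos divide_pos_pos zero_less_power parcyl_integral_pos Gamma_real_pos)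
    (simp_all add: add_pos_nonneg)

lemma higher_deriv_psi_fun_has_real_derivative:
  assumes "b > 0" "\<sigma> > 0" "\<rho> > 0"
  shows "((deriv ^^ n) (psi_fun a b \<sigma> \<rho>) has_real_derivative (deriv ^^ Suc n) (psi_fun a b \<sigma> \<rho>) x) (at x)"
proof -
  have "\<exists>D. ((deriv ^^ n) (psi_fun a b \<sigma> \<rho>) has_real_derivative D) (at x)"
    unfolding higher_deriv_psi_fun[OF assms]
    by (rule exI, rule parcyl_integral_affine_has_real_derivative) (use assms in \<open>simp add: add_pos_nonneg\<close>)
  then show ?thesis
    using DERIV_imp_deriv by fastforce
qed

lemma strict_mono_higher_deriv_psi_fun:
  assumes "b > 0" "\<sigma> > 0" "\<rho> > 0"
  shows "strict_mono ((deriv ^^ n) (psi_fun a b \<sigma> \<rho>))"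
  using DERIV_pos_imp_increasing higher_deriv_psi_fun_has_real_derivative[OF assms]
    higher_deriv_psi_fun_pos[OF assms]
  by (metis strict_monoI)

theorem corollary4p6:
  fixes a b \<sigma> \<rho> c x0 xinf :: real
  assumes hb: "b > 0" and h\<sigma>: "\<sigma> > 0" and h\<rho>: "\<rho> > 0" and hc: "c > 0"
    and hx0: "x0 > c"
      "(x0 - c) * deriv (psi_fun a b \<sigma> \<rho>) x0 - psi_fun a b \<sigma> \<rho> x0 = 0"
      "\<forall>y>c. (y - c) * deriv (psi_fun a b \<sigma> \<rho>) y - psi_fun a b \<sigma> \<rho> y = 0 \<longrightarrow> y = x0"
    and hxi: "xinf > c"
      "(xinf - c) * deriv (deriv (psi_fun a b \<sigma> \<rho>)) xinf - deriv (psi_fun a b \<sigma> \<rho>) xinf = 0"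
      "\<forall>y>c. (y - c) * deriv (deriv (psi_fun a b \<sigma> \<rho>)) y - deriv (psi_fun a b \<sigma> \<rho>) y = 0
              \<longrightarrow> y = xinf"
  shows "(\<forall>x<x0. (x - c) * deriv (psi_fun a b \<sigma> \<rho>) x - psi_fun a b \<sigma> \<rho> x < 0) \<and>
         (\<forall>x>xinf. (x - c) * deriv (deriv (psi_fun a b \<sigma> \<rho>)) x - deriv (psi_fun a b \<sigma> \<rho>) x > 0)"
proof -
  let ?\<psi> = "psi_fun a b \<sigma> \<rho>"
  have pos: "?\<psi> x > 0" "deriv ?\<psi> x > 0" for x
    using higher_deriv_psi_fun_pos[OF hb h\<sigma> h\<rho>, where n = 0]
      higher_deriv_psi_fun_pos[OF hb h\<sigma> h\<rho>, where n = 1]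
    by simp_all
  have deriv: "(?\<psi> has_real_derivative deriv ?\<psi> x) (at x)"
    "(deriv ?\<psi> has_real_derivative deriv (deriv ?\<psi>) x) (at x)" for x
    using higher_deriv_psi_fun_has_real_derivative[OF hb h\<sigma> h\<rho>, where n = 0]
      higher_deriv_psi_fun_has_real_derivative[OF hb h\<sigma> h\<rho>, where n = 1]
    by simp_all
  have mono: "strict_mono (deriv ?\<psi>)" "strict_mono (deriv (deriv ?\<psi>))"
    using strict_mono_higher_deriv_psi_fun[OF hb h\<sigma> h\<rho>, where n = 1]
      strict_mono_higher_deriv_psi_fun[OF hb h\<sigma> h\<rho>, where n = 2]
    by (simp_all add: numeral_2_eq_2)
  show ?thesis
    using tangent_gap_neg_below_root[OF deriv(1) mono(1) hx0(1,2) _ pos(1) less_imp_le[OF pos(2)]]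
      tangent_gap_pos_after_root[OF deriv(2) mono(2) hxi(1,2)]
    by blast
qed

end
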